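(* Let $G$ be a group with bounded centralizer sequences. Then $[g_1,g_2]=g_1g_2g_1^{-1}g_2^{-1}$ is a weak identity in $G$.
   Context: A group $G$ has bounded centralizer sequences if there is an integer $N$ such that for every chain of subsets $P_1\subset P_2\subset\dots\subset P_N$ of $G$ with each $P_i$ consisting of mutually commuting elements, the chain of centralizers $C_G(P_1)\supseteq C_G(P_2)\supseteq\dots\supseteq C_G(P_N)$ is not strictly decreasing. Let $F$ be the free group on countably many generators $g_1,g_2,\dots$. For $N\ge1$, $F^{\times N}$ is the direct product of $N$ copies of $F$, $i_k:F\to F^{\times N}$ the $k$-th inclusion. An element $f\in F$ is a weak identity in $G$ if there exists $N\ge1$ such that for every homomorphism $\rho:F^{\times N}\to G$ there is $k\in\{1,\dots,N\}$ with $\rho(i_k(f))=1$. *)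

theory Defs
  imports "HOL-Algebra.Product_Groups"
begin

text \<open>Elements are reduced words; a letter (b, n) stands for the generator g_n
  (if b = False) or its inverse (if b = True).\<close>

type_synonym fletter = "bool \<times> nat"

definition cancels :: "fletter \<Rightarrow> fletter \<Rightarrow> bool" where
  "cancels x y \<longleftrightarrow> snd x = snd y \<and> fst x \<noteq> fst y"

fun reduced :: "fletter list \<Rightarrow> bool" where
  "reduced [] = True"
| "reduced [x] = True"
| "reduced (x # y # ws) = (\<not> cancels x y \<and> reduced (y # ws))"

definition push :: "fletter \<Rightarrow> fletter list \<Rightarrow> fletter list" where
  "push x ws = (case ws of [] \<Rightarrow> [x] | y # r \<Rightarrow> (if cancels x y then r else x # ws))"

definition fmult :: "fletter list \<Rightarrow> fletter list \<Rightarrow> fletter list" where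
  "fmult xs ys = foldr push xs ys"

definition free_group :: "fletter list monoid" where
  "free_group = \<lparr>carrier = {ws. reduced ws}, monoid.mult = fmult, one = []\<rparr>"

definition gen :: "nat \<Rightarrow> fletter list" where
  "gen n = [(False, n)]"

definition comm12 :: "fletter list" where
  "comm12 = gen 1 \<otimes>\<^bsub>free_group\<^esub> (gen 2 \<otimes>\<^bsub>free_group\<^esub>
     (inv\<^bsub>free_group\<^esub> (gen 1) \<otimes>\<^bsub>free_group\<^esub> inv\<^bsub>free_group\<^esub> (gen 2)))"

definition free_power :: "nat \<Rightarrow> (nat \<Rightarrow> fletter list) monoid" where
  "free_power N = product_group {1..N} (\<lambda>_. free_group)"

definition incl :: "nat \<Rightarrow> nat \<Rightarrow> fletter list \<Rightarrow> (nat \<Rightarrow> fletter list)" where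
  "incl N k f = (\<lambda>j\<in>{1..N}. if j = k then f else \<one>\<^bsub>free_group\<^esub>)"

definition weak_identity :: "fletter list \<Rightarrow> ('g, 'b) monoid_scheme \<Rightarrow> bool" where
  "weak_identity f G \<longleftrightarrow> (\<exists>N\<ge>1. \<forall>\<rho>\<in>hom (free_power N) G.
      \<exists>k\<in>{1..N}. \<rho> (incl N k f) = \<one>\<^bsub>G\<^esub>)"

definition centralizer_set :: "('g, 'b) monoid_scheme \<Rightarrow> 'g set \<Rightarrow> 'g set" where
  "centralizer_set G P = {x \<in> carrier G. \<forall>p\<in>P. x \<otimes>\<^bsub>G\<^esub> p = p \<otimes>\<^bsub>G\<^esub> x}"

definition bounded_centralizer_sequences :: "('g, 'b) monoid_scheme \<Rightarrow> bool" where
  "bounded_centralizer_sequences G \<longleftrightarrow> (\<exists>N::nat. \<forall>P :: nat \<Rightarrow> 'g set.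
      ((\<forall>i\<in>{1..N}. P i \<subseteq> carrier G \<and>
          (\<forall>x\<in>P i. \<forall>y\<in>P i. x \<otimes>\<^bsub>G\<^esub> y = y \<otimes>\<^bsub>G\<^esub> x))
       \<and> (\<forall>i\<in>{1..<N}. P i \<subseteq> P (Suc i)))
      \<longrightarrow> \<not> (\<forall>i\<in>{1..<N}. centralizer_set G (P (Suc i)) \<subset> centralizer_set G (P i)))"

end

theory Submission
  imports Defs
begin

text \<open>Let rho : F^N -> G be a homomorphism and put a_k = rho(i_k g_1), b_k = rho(i_k g_2).
  Elements coming from different factors of F^N commute, so the a_k commute with each other
  and b_k commutes with every a_j, j \<noteq> k. If no rho(i_k [g_1, g_2]) were trivial, a_k and b_k
  would not commute; then b_(i+1) lies in the centralizer of {a_1, ..., a_i} but not in that of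
  {a_1, ..., a_(i+1)}, so the sets {a_1, ..., a_i} form a strictly decreasing centralizer chain
  of length N, which is impossible for N large.\<close>

lemma inv_gen: "inv\<^bsub>free_group\<^esub> (gen n) = [(True, n)]"
  unfolding m_inv_def
proof (rule the_equality)
  show "[(True, n)] \<in> carrier free_group \<and> gen n \<otimes>\<^bsub>free_group\<^esub> [(True, n)] = \<one>\<^bsub>free_group\<^esub> \<and>
        [(True, n)] \<otimes>\<^bsub>free_group\<^esub> gen n = \<one>\<^bsub>free_group\<^esub>"
    by (simp add: free_group_def gen_def fmult_def push_def cancels_def)
next
  fix y assume "y \<in> carrier free_group \<and> gen n \<otimes>\<^bsub>free_group\<^esub> y = \<one>\<^bsub>free_group\<^esub> \<and>
        y \<otimes>\<^bsub>free_group\<^esub> gen n = \<one>\<^bsub>free_group\<^esub>"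
  then have "push (False, n) y = []" by (simp add: free_group_def gen_def fmult_def)
  then show "y = [(True, n)]"
    by (auto simp: push_def cancels_def split: list.splits if_splits)
qed

lemma comm12_eq: "comm12 = [(False, 1), (False, 2), (True, 1), (True, 2)]"
  unfolding comm12_def inv_gen by (simp add: free_group_def gen_def fmult_def push_def cancels_def)

lemma reduced_gen: "reduced (gen n)"
  by (simp add: gen_def)

lemma reduced_comm12: "reduced comm12"
  by (simp add: comm12_eq cancels_def)

lemma fmult_Nil_right: "reduced xs \<Longrightarrow> fmult xs [] = xs"
  by (induction xs rule: reduced.induct) (simp_all add: fmult_def push_def)

lemma fmult_Nil_left: "fmult [] xs = xs"
  by (simp add: fmult_def)

lemma incl_carrier: "reduced f \<Longrightarrow> incl N k f \<in> carrier (free_power N)"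
  by (auto simp: free_power_def incl_def free_group_def)

lemma incl_mult: "incl N k f \<otimes>\<^bsub>free_power N\<^esub> incl N k g = incl N k (fmult f g)"
  by (auto simp: free_power_def incl_def free_group_def fmult_Nil_left)

lemma incl_commute:
  assumes "reduced f" "reduced g" "k \<noteq> j"
  shows "incl N k f \<otimes>\<^bsub>free_power N\<^esub> incl N j g = incl N j g \<otimes>\<^bsub>free_power N\<^esub> incl N k f"
  using assms by (auto simp: free_power_def incl_def free_group_def fmult_Nil_right fmult_Nil_left)

text \<open>Computed letter by letter on reduced words.\<close>
lemma incl_comm12_mult:
  "incl N k comm12 \<otimes>\<^bsub>free_power N\<^esub> (incl N k (gen 2) \<otimes>\<^bsub>free_power N\<^esub> incl N k (gen 1))
    = incl N k (gen 1) \<otimes>\<^bsub>free_power N\<^esub> incl N k (gen 2)"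
  by (simp add: incl_mult comm12_eq gen_def fmult_def push_def cancels_def)

lemma hom_incl_carrier:
  "\<rho> \<in> hom (free_power N) G \<Longrightarrow> reduced f \<Longrightarrow> \<rho> (incl N k f) \<in> carrier G"
  using incl_carrier by (auto simp: hom_def)

lemma hom_incl_mult:
  assumes "\<rho> \<in> hom (free_power N) G" "reduced f" "reduced g"
  shows "\<rho> (incl N k f \<otimes>\<^bsub>free_power N\<^esub> incl N j g) = \<rho> (incl N k f) \<otimes>\<^bsub>G\<^esub> \<rho> (incl N j g)"
  using assms incl_carrier by (auto simp: hom_def)

lemma hom_incl_commute:
  assumes "\<rho> \<in> hom (free_power N) G" "reduced f" "reduced g" "k \<noteq> j"
  shows "\<rho> (incl N k f) \<otimes>\<^bsub>G\<^esub> \<rho> (incl N j g) = \<rho> (incl N j g) \<otimes>\<^bsub>G\<^esub> \<rho> (incl N k f)"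
  using hom_incl_mult[OF assms(1-3)] hom_incl_mult[OF assms(1,3,2)] incl_commute[OF assms(2-4)]
  by metis

lemma hom_incl_comm12_eq_one:
  assumes "group G" and \<rho>: "\<rho> \<in> hom (free_power N) G"
    and commute: "\<rho> (incl N k (gen 1)) \<otimes>\<^bsub>G\<^esub> \<rho> (incl N k (gen 2))
      = \<rho> (incl N k (gen 2)) \<otimes>\<^bsub>G\<^esub> \<rho> (incl N k (gen 1))"
  shows "\<rho> (incl N k comm12) = \<one>\<^bsub>G\<^esub>"
proof -
  interpret group G by fact
  let ?a = "\<rho> (incl N k (gen 1))" and ?b = "\<rho> (incl N k (gen 2))" and ?c = "\<rho> (incl N k comm12)"
  have carrier: "?a \<in> carrier G" "?b \<in> carrier G" "?c \<in> carrier G"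
    using \<rho> reduced_gen reduced_comm12 by (auto intro: hom_incl_carrier)
  let ?x = "incl N k (gen 2) \<otimes>\<^bsub>free_power N\<^esub> incl N k (gen 1)"
  have "?x \<in> carrier (free_power N)"
    unfolding incl_mult by (rule incl_carrier) (simp add: gen_def fmult_def push_def cancels_def)
  then have "?c \<otimes>\<^bsub>G\<^esub> (?b \<otimes>\<^bsub>G\<^esub> ?a) = \<rho> (incl N k comm12 \<otimes>\<^bsub>free_power N\<^esub> ?x)"
    using hom_mult[OF \<rho> incl_carrier[OF reduced_comm12]] hom_incl_mult[OF \<rho> reduced_gen reduced_gen]
    by simp
  also have "\<dots> = \<rho> (incl N k (gen 1) \<otimes>\<^bsub>free_power N\<^esub> incl N k (gen 2))"
    by (simp only: incl_comm12_mult)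
  also have "\<dots> = ?a \<otimes>\<^bsub>G\<^esub> ?b"
    by (rule hom_incl_mult[OF \<rho> reduced_gen reduced_gen])
  also have "\<dots> = \<one>\<^bsub>G\<^esub> \<otimes>\<^bsub>G\<^esub> (?b \<otimes>\<^bsub>G\<^esub> ?a)"
    using commute carrier by simp
  finally show ?thesis
    using carrier by (simp add: right_cancel)
qed

lemma centralizer_set_strict_mono:
  assumes "P \<subseteq> Q" "b \<in> centralizer_set G P" "x \<in> Q" "b \<otimes>\<^bsub>G\<^esub> x \<noteq> x \<otimes>\<^bsub>G\<^esub> b"
  shows "centralizer_set G Q \<subset> centralizer_set G P"
  using assms unfolding centralizer_set_def by blast

lemma bounded_centralizer_sequences_commuting_pair:
  assumes "bounded_centralizer_sequences G"
  obtains N :: nat where "N \<ge> 1"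
    and "\<And>a b. (\<And>k. a k \<in> carrier G) \<Longrightarrow> (\<And>k. b k \<in> carrier G) \<Longrightarrow>
      (\<And>j k. a j \<otimes>\<^bsub>G\<^esub> a k = a k \<otimes>\<^bsub>G\<^esub> a j) \<Longrightarrow>
      (\<And>j k. j < k \<Longrightarrow> b k \<otimes>\<^bsub>G\<^esub> a j = a j \<otimes>\<^bsub>G\<^esub> b k) \<Longrightarrow>
      \<exists>k\<in>{1..N}. a k \<otimes>\<^bsub>G\<^esub> b k = b k \<otimes>\<^bsub>G\<^esub> a k"
proof -
  obtain N where N: "\<And>P. (\<forall>i\<in>{1..N}. P i \<subseteq> carrier G \<and>
          (\<forall>x\<in>P i. \<forall>y\<in>P i. x \<otimes>\<^bsub>G\<^esub> y = y \<otimes>\<^bsub>G\<^esub> x))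
       \<and> (\<forall>i\<in>{1..<N}. P i \<subseteq> P (Suc i))
      \<Longrightarrow> \<not> (\<forall>i\<in>{1..<N}. centralizer_set G (P (Suc i)) \<subset> centralizer_set G (P i))"
    using assms unfolding bounded_centralizer_sequences_def by blast
  show ?thesis
  proof (rule that[of "max 1 N"])
    show "max 1 N \<ge> 1" by simp
    fix a b :: "nat \<Rightarrow> _"
    assume a: "\<And>k. a k \<in> carrier G" and b: "\<And>k. b k \<in> carrier G"
      and aa: "\<And>j k. a j \<otimes>\<^bsub>G\<^esub> a k = a k \<otimes>\<^bsub>G\<^esub> a j"
      and ba: "\<And>j k. j < k \<Longrightarrow> b k \<otimes>\<^bsub>G\<^esub> a j = a j \<otimes>\<^bsub>G\<^esub> b k"
    show "\<exists>k\<in>{1..max 1 N}. a k \<otimes>\<^bsub>G\<^esub> b k = b k \<otimes>\<^bsub>G\<^esub> a k"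
    proof (rule ccontr)
      assume "\<not> ?thesis"
      then have ab: "a k \<otimes>\<^bsub>G\<^esub> b k \<noteq> b k \<otimes>\<^bsub>G\<^esub> a k" if "k \<in> {1..N}" for k
        using that by auto
      define P where "P i = a ` {1..i}" for i
      have "centralizer_set G (P (Suc i)) \<subset> centralizer_set G (P i)" if "i \<in> {1..<N}" for i
      proof (rule centralizer_set_strict_mono)
        show "P i \<subseteq> P (Suc i)" "a (Suc i) \<in> P (Suc i)"
          unfolding P_def by auto
        show "b (Suc i) \<in> centralizer_set G (P i)"
          unfolding centralizer_set_def P_def using b ba by auto
        show "b (Suc i) \<otimes>\<^bsub>G\<^esub> a (Suc i) \<noteq> a (Suc i) \<otimes>\<^bsub>G\<^esub> b (Suc i)"
          using ab[of "Suc i"] that by auto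
      qed
      moreover have "P i \<subseteq> P (Suc i)" for i
        unfolding P_def by auto
      moreover have "P i \<subseteq> carrier G" "\<forall>x\<in>P i. \<forall>y\<in>P i. x \<otimes>\<^bsub>G\<^esub> y = y \<otimes>\<^bsub>G\<^esub> x" for i
        unfolding P_def using a aa by auto
      ultimately show False
        using N[of P] by blast
    qed
  qed
qed

theorem lemma3p3:
  fixes G :: "('g, 'b) monoid_scheme"
  assumes "group G"
    and "bounded_centralizer_sequences G"
  shows "weak_identity comm12 G"
proof -
  obtain N :: nat where "N \<ge> 1"
    and N: "\<And>a b. (\<And>k. a k \<in> carrier G) \<Longrightarrow> (\<And>k. b k \<in> carrier G) \<Longrightarrow>
      (\<And>j k. a j \<otimes>\<^bsub>G\<^esub> a k = a k \<otimes>\<^bsub>G\<^esub> a j) \<Longrightarrow>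
      (\<And>j k. j < k \<Longrightarrow> b k \<otimes>\<^bsub>G\<^esub> a j = a j \<otimes>\<^bsub>G\<^esub> b k) \<Longrightarrow>
      \<exists>k\<in>{1..N}. a k \<otimes>\<^bsub>G\<^esub> b k = b k \<otimes>\<^bsub>G\<^esub> a k"
    using bounded_centralizer_sequences_commuting_pair[OF assms(2)] by blast
  have "\<exists>k\<in>{1..N}. \<rho> (incl N k comm12) = \<one>\<^bsub>G\<^esub>" if \<rho>: "\<rho> \<in> hom (free_power N) G" for \<rho>
  proof -
    have "\<exists>k\<in>{1..N}. \<rho> (incl N k (gen 1)) \<otimes>\<^bsub>G\<^esub> \<rho> (incl N k (gen 2))
        = \<rho> (incl N k (gen 2)) \<otimes>\<^bsub>G\<^esub> \<rho> (incl N k (gen 1))"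
    proof (rule N)
      show "\<rho> (incl N k (gen 1)) \<in> carrier G" "\<rho> (incl N k (gen 2)) \<in> carrier G" for k
        by (rule hom_incl_carrier[OF \<rho> reduced_gen])+
      show "\<rho> (incl N j (gen 1)) \<otimes>\<^bsub>G\<^esub> \<rho> (incl N k (gen 1))
          = \<rho> (incl N k (gen 1)) \<otimes>\<^bsub>G\<^esub> \<rho> (incl N j (gen 1))" for j k
        by (cases "j = k") (simp_all add: hom_incl_commute[OF \<rho> reduced_gen reduced_gen])
      show "\<rho> (incl N k (gen 2)) \<otimes>\<^bsub>G\<^esub> \<rho> (incl N j (gen 1))
          = \<rho> (incl N j (gen 1)) \<otimes>\<^bsub>G\<^esub> \<rho> (incl N k (gen 2))" if "j < k" for j k
        using that by (simp add: hom_incl_commute[OF \<rho> reduced_gen reduced_gen])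
    qed
    then show ?thesis
      using hom_incl_comm12_eq_one[OF assms(1) \<rho>] by blast
  qed
  then show ?thesis
    unfolding weak_identity_def using \<open>N \<ge> 1\<close> by blast
qed

end
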